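(* Let $q$ be a prime power, $t>1$ an integer, and $\Gamma_1,\ldots,\Gamma_t$ pairwise disjoint projective bundles of conics in $\mathrm{PG}(2,q)$. Let $A$ be the binary point-line incidence matrix of $\mathrm{PG}(2,q)$ and $B_i$ the binary point-conic incidence matrix of $\Gamma_i$ (rows indexed by the points in the same order), and let $H_{q,t}=(A\mid B_1\mid\cdots\mid B_t)$. Then the maximum column intersection of $H_{q,t}$ is at most $4$. Consequently, one round of the bit-flipping decoding algorithm with respect to $H_{q,t}$ corrects every error of Hamming weight at most $\lfloor\frac{q+1}{8}\rfloor$ in the code $C=\ker(H_{q,t})=\{c: cH_{q,t}^\top=0\}$; that is, for every $c\in C$ and $e$ with $\mathrm{wt}(e)\le\lfloor\frac{q+1}{8}\rfloor$, one round applied to $c+e$ outputs $c$.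
   Context: $\mathrm{PG}(2,q)$ is the projective plane whose points and lines are the 1- and 2-dimensional subspaces of $\mathbb{F}_q^3$. A (non-degenerate) conic is the set of points of $\mathrm{PG}(2,q)$ satisfying an irreducible homogeneous quadratic equation; it has $q+1$ points and meets every line in at most two points. A projective bundle of conics is a collection of $q^2+q+1$ conics any two of which meet in exactly one point; two bundles are disjoint if they share no conic. The maximum column intersection of a binary matrix is the maximum, over pairs of distinct columns, of the number of rows in which both columns have a $1$. $H_{q,t}$ has constant column weight $v=q+1$. One round of the bit-flipping algorithm on input $y$ for a binary matrix $H$ of constant column weight $v$: compute $s=Hy^\top$; for each column $j$ let $u_j$ be the number of rows $i$ with $H_{ij}=1$ and $s_i=1$; output $y$ with the bits in positions $\{j: u_j>v/2\}$ flipped. *)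

theory Defs
  imports Main "HOL-Library.Cardinality"
begin

type_synonym 'a vec3 = "'a \<times> 'a \<times> 'a"

definition sc3 :: "'a::field \<Rightarrow> 'a vec3 \<Rightarrow> 'a vec3" where
  "sc3 c v = (case v of (x, y, z) \<Rightarrow> (c * x, c * y, c * z))"

definition dot3 :: "'a::field vec3 \<Rightarrow> 'a vec3 \<Rightarrow> 'a" where
  "dot3 u v = (case u of (a, b, c) \<Rightarrow> case v of (x, y, z) \<Rightarrow> a * x + b * y + c * z)"

definition pg_point :: "'a::field vec3 \<Rightarrow> 'a vec3 set" where
  "pg_point v = {sc3 c v | c. True}"

definition pg_points :: "'a::field vec3 set set" where
  "pg_points = {pg_point v | v. v \<noteq> (0, 0, 0)}"

text \<open>A line is a 2-dimensional subspace, i.e. the kernel of a nonzero linear functional u;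
  we represent it by the set of points it contains (incidence = containment).\<close>
definition pg_line_of :: "'a::field vec3 \<Rightarrow> 'a vec3 set set" where
  "pg_line_of u = {P \<in> pg_points. \<forall>x\<in>P. dot3 u x = 0}"

definition pg_lines :: "'a::field vec3 set set set" where
  "pg_lines = {pg_line_of u | u. u \<noteq> (0, 0, 0)}"

type_synonym 'a qcoef = "'a \<times> 'a \<times> 'a \<times> 'a \<times> 'a \<times> 'a"

definition qform :: "'a::field qcoef \<Rightarrow> 'a vec3 \<Rightarrow> 'a" where
  "qform Q v = (case Q of (a, b, c, d, e, f) \<Rightarrow> case v of (x, y, z) \<Rightarrow>
      a * x^2 + b * y^2 + c * z^2 + d * x * y + e * x * z + f * y * z)"

text \<open>The (half-)discriminant; the form defines a non-degenerate (absolutely irreducible)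
  conic iff it is nonzero (valid in every characteristic).\<close>
definition qdisc :: "'a::field qcoef \<Rightarrow> 'a" where
  "qdisc Q = (case Q of (a, b, c, d, e, f) \<Rightarrow>
      4 * a * b * c - a * f^2 - b * e^2 - c * d^2 + d * e * f)"

definition conic_of :: "'a::field qcoef \<Rightarrow> 'a vec3 set set" where
  "conic_of Q = {P \<in> pg_points. \<forall>x\<in>P. qform Q x = 0}"

definition pg_conics :: "'a::field vec3 set set set" where
  "pg_conics = {conic_of Q | Q. qdisc Q \<noteq> 0}"

definition proj_bundle :: "('a::{finite,field}) vec3 set set set \<Rightarrow> bool" where
  "proj_bundle \<Gamma> \<longleftrightarrow> \<Gamma> \<subseteq> pg_conics
     \<and> card \<Gamma> = CARD('a)^2 + CARD('a) + 1
     \<and> (\<forall>C\<in>\<Gamma>. \<forall>D\<in>\<Gamma>. C \<noteq> D \<longrightarrow> card (C \<inter> D) = 1)"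

definition max_col_intersection :: "'r set \<Rightarrow> 'k set \<Rightarrow> ('r \<Rightarrow> 'k \<Rightarrow> bool) \<Rightarrow> nat" where
  "max_col_intersection R K H =
     Max {card {r \<in> R. H r j \<and> H r k} | j k. j \<in> K \<and> k \<in> K \<and> j \<noteq> k}"

definition syndrome :: "'r set \<Rightarrow> 'k set \<Rightarrow> ('r \<Rightarrow> 'k \<Rightarrow> bool) \<Rightarrow> ('k \<Rightarrow> bool) \<Rightarrow> 'r \<Rightarrow> bool" where
  "syndrome R K H y r = odd (card {j \<in> K. H r j \<and> y j})"

definition unsat :: "'r set \<Rightarrow> 'k set \<Rightarrow> ('r \<Rightarrow> 'k \<Rightarrow> bool) \<Rightarrow> ('k \<Rightarrow> bool) \<Rightarrow> 'k \<Rightarrow> nat" where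
  "unsat R K H y j = card {r \<in> R. H r j \<and> syndrome R K H y r}"

text \<open>One round of bit flipping for column weight v: flip bit j iff u_j > v/2.\<close>
definition bitflip :: "'r set \<Rightarrow> 'k set \<Rightarrow> ('r \<Rightarrow> 'k \<Rightarrow> bool) \<Rightarrow> nat \<Rightarrow> ('k \<Rightarrow> bool) \<Rightarrow> 'k \<Rightarrow> bool" where
  "bitflip R K H v y j = (if 2 * unsat R K H y j > v then \<not> y j else y j)"

definition in_kernel :: "'r set \<Rightarrow> 'k set \<Rightarrow> ('r \<Rightarrow> 'k \<Rightarrow> bool) \<Rightarrow> ('k \<Rightarrow> bool) \<Rightarrow> bool" where
  "in_kernel R K H c \<longleftrightarrow> (\<forall>r\<in>R. even (card {j \<in> K. H r j \<and> c j}))"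

definition hweight :: "'k set \<Rightarrow> ('k \<Rightarrow> bool) \<Rightarrow> nat" where
  "hweight K e = card {j \<in> K. e j}"

text \<open>Columns: Inl L for lines L (matrix A), Inr (i, C) for conics C of bundle i (matrix B_i).
  Rows: points of PG(2,q).\<close>
definition Hcols :: "nat \<Rightarrow> (nat \<Rightarrow> 'a::field vec3 set set set)
     \<Rightarrow> ('a vec3 set set + nat \<times> 'a vec3 set set) set" where
  "Hcols t \<Gamma> = Inl ` pg_lines \<union> (\<Union>i\<in>{1..t}. (\<lambda>C. Inr (i, C)) ` \<Gamma> i)"

definition Hent :: "'a vec3 set \<Rightarrow> ('a vec3 set set + nat \<times> 'a vec3 set set) \<Rightarrow> bool" where
  "Hent P col = (case col of Inl L \<Rightarrow> P \<in> L | Inr (i, C) \<Rightarrow> P \<in> C)"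

end

theory Submission
  imports Defs
begin

text \<open>Two lines meet in at most one point and a line meets a non-degenerate conic in at most
  two. Two distinct non-degenerate conics meet in at most four points: in the frame of three
  common points both forms are determined by their three polar values, and two further common
  points, no three of the five being collinear, leave only a one-dimensional space of such
  values. Every conic of a bundle meets
  the other conics of its bundle, hence is nonempty, and a nonempty non-degenerate conic has
  at least q - 1 points, since each non-tangent line through one of its points meets it
  again; so every column has weight at least q - 1.

  Let e have weight w with 8 w \<le> q + 1. If e_j = 1, each of the other w - 1 errors
  satisfies at most four checks of column j, so more than (q + 1)/2 of its checks fail.
  If e_j = 0, a check of column j fails only if it contains an error, so at most
  4 w \<le> (q + 1)/2 of them fail.\<close>

section \<open>Linear algebra in dimension three\<close>

lemma sc3_one [simp]: "sc3 1 v = v"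
  by (cases v rule: prod_cases3) (simp add: sc3_def)

lemma sc3_sc3: "sc3 a (sc3 b v) = sc3 (a * b) v"
  by (cases v rule: prod_cases3) (simp add: sc3_def)

lemma sc3_eq_zero_iff: "sc3 c v = (0, 0, 0) \<longleftrightarrow> c = 0 \<or> v = (0, 0, 0)"
  by (cases v rule: prod_cases3) (auto simp: sc3_def)

lemma dot3_sc3_right: "dot3 u (sc3 c v) = c * dot3 u v"
  by (cases u rule: prod_cases3; cases v rule: prod_cases3)
    (simp add: dot3_def sc3_def algebra_simps)

lemma dot3_sc3_left: "dot3 (sc3 c u) v = c * dot3 u v"
  by (cases u rule: prod_cases3; cases v rule: prod_cases3)
    (simp add: dot3_def sc3_def algebra_simps)

definition det3 :: "'a::field vec3 \<Rightarrow> 'a vec3 \<Rightarrow> 'a vec3 \<Rightarrow> 'a" where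
  "det3 u v w = (case u of (a1, a2, a3) \<Rightarrow> case v of (b1, b2, b3) \<Rightarrow> case w of (c1, c2, c3) \<Rightarrow>
     a1 * (b2 * c3 - b3 * c2) - a2 * (b1 * c3 - b3 * c1) + a3 * (b1 * c2 - b2 * c1))"

definition lincomb3 :: "'a::field vec3 \<Rightarrow> 'a vec3 \<Rightarrow> 'a vec3 \<Rightarrow> 'a vec3 \<Rightarrow> 'a vec3" where
  "lincomb3 k u v w = (case k of (x, y, z) \<Rightarrow>
     case u of (a1, a2, a3) \<Rightarrow> case v of (b1, b2, b3) \<Rightarrow> case w of (c1, c2, c3) \<Rightarrow>
     (x * a1 + y * b1 + z * c1, x * a2 + y * b2 + z * c2, x * a3 + y * b3 + z * c3))"

definition frame_coords :: "'a::field vec3 \<Rightarrow> 'a vec3 \<Rightarrow> 'a vec3 \<Rightarrow> 'a vec3 \<Rightarrow> 'a vec3" where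
  "frame_coords u v w p =
     (det3 p v w / det3 u v w, det3 u p w / det3 u v w, det3 u v p / det3 u v w)"

lemma lincomb3_zero [simp]: "lincomb3 (0, 0, 0) u v w = (0, 0, 0)"
  by (cases u rule: prod_cases3; cases v rule: prod_cases3; cases w rule: prod_cases3)
    (simp add: lincomb3_def)

lemma lincomb3_first: "lincomb3 (x, 0, 0) u v w = sc3 x u"
  by (cases u rule: prod_cases3; cases v rule: prod_cases3; cases w rule: prod_cases3)
    (simp add: lincomb3_def sc3_def)

lemma lincomb3_second: "lincomb3 (0, y, 0) u v w = sc3 y v"
  by (cases u rule: prod_cases3; cases v rule: prod_cases3; cases w rule: prod_cases3)
    (simp add: lincomb3_def sc3_def)

lemma sc3_lincomb3: "sc3 c (lincomb3 k u v w) = lincomb3 (sc3 c k) u v w"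
  by (cases k rule: prod_cases3; cases u rule: prod_cases3; cases v rule: prod_cases3;
      cases w rule: prod_cases3) (simp add: lincomb3_def sc3_def algebra_simps)

lemma dot3_lincomb3:
  "dot3 n (lincomb3 (x, y, z) u v w) = x * dot3 n u + y * dot3 n v + z * dot3 n w"
  by (cases n rule: prod_cases3; cases u rule: prod_cases3; cases v rule: prod_cases3;
      cases w rule: prod_cases3) (simp add: lincomb3_def dot3_def algebra_simps)

lemma det3_lincomb3:
  "det3 (lincomb3 (x, y, z) u v w) v w = x * det3 u v w"
  "det3 u (lincomb3 (x, y, z) u v w) w = y * det3 u v w"
  "det3 u v (lincomb3 (x, y, z) u v w) = z * det3 u v w"
proof -
  obtain a1 a2 a3 where u: "u = (a1, a2, a3)" by (cases u) auto
  obtain b1 b2 b3 where v: "v = (b1, b2, b3)" by (cases v) auto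
  obtain c1 c2 c3 where w: "w = (c1, c2, c3)" by (cases w) auto
  show "det3 (lincomb3 (x, y, z) u v w) v w = x * det3 u v w"
    "det3 u (lincomb3 (x, y, z) u v w) w = y * det3 u v w"
    "det3 u v (lincomb3 (x, y, z) u v w) = z * det3 u v w"
    unfolding u v w lincomb3_def det3_def by (simp; algebra)+
qed

lemma frame_coords_lincomb3:
  assumes "det3 u v w \<noteq> 0"
  shows "frame_coords u v w (lincomb3 k u v w) = k"
  using assms by (cases k rule: prod_cases3) (simp add: frame_coords_def det3_lincomb3)

lemma lincomb3_frame_coords:
  assumes "det3 u v w \<noteq> 0"
  shows "lincomb3 (frame_coords u v w p) u v w = p"
proof -
  obtain a1 a2 a3 where u: "u = (a1, a2, a3)" by (cases u) auto
  obtain b1 b2 b3 where v: "v = (b1, b2, b3)" by (cases v) auto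
  obtain c1 c2 c3 where w: "w = (c1, c2, c3)" by (cases w) auto
  obtain p1 p2 p3 where p: "p = (p1, p2, p3)" by (cases p) auto
  have "det3 u v w * p1 = det3 p v w * a1 + det3 u p w * b1 + det3 u v p * c1"
       "det3 u v w * p2 = det3 p v w * a2 + det3 u p w * b2 + det3 u v p * c2"
       "det3 u v w * p3 = det3 p v w * a3 + det3 u p w * b3 + det3 u v p * c3"
    by (simp_all add: u v w p det3_def; algebra)+
  then show ?thesis
    using assms by (simp add: u v w p lincomb3_def frame_coords_def field_simps)
qed

lemma lincomb3_inject:
  assumes "det3 u v w \<noteq> 0"
  shows "lincomb3 k u v w = lincomb3 k' u v w \<longleftrightarrow> k = k'"
  using frame_coords_lincomb3[OF assms] by metis

lemma det3_extend_one:
  assumes "a \<noteq> (0, 0, 0)"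
  shows "\<exists>u v. det3 a u v \<noteq> 0"
proof -
  obtain a1 a2 a3 where a: "a = (a1, a2, a3)" by (cases a) auto
  consider "a1 \<noteq> 0" | "a1 = 0" "a2 \<noteq> 0" | "a1 = 0" "a2 = 0" "a3 \<noteq> 0"
    using assms a by auto
  then show ?thesis
  proof cases
    case 1
    then have "det3 a (0, 1, 0) (0, 0, 1) \<noteq> 0" by (simp add: a det3_def)
    then show ?thesis by blast
  next
    case 2
    then have "det3 a (1, 0, 0) (0, 0, 1) \<noteq> 0" by (simp add: a det3_def)
    then show ?thesis by blast
  next
    case 3
    then have "det3 a (1, 0, 0) (0, 1, 0) \<noteq> 0" by (simp add: a det3_def)
    then show ?thesis by blast
  qed
qed

lemma det3_extend_two:
  assumes "a \<noteq> (0, 0, 0)" and "\<forall>c. b \<noteq> sc3 c a"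
  shows "\<exists>w. det3 a b w \<noteq> 0"
proof (rule ccontr)
  assume "\<not> ?thesis"
  then have dets: "det3 a b (1, 0, 0) = 0" "det3 a b (0, 1, 0) = 0" "det3 a b (0, 0, 1) = 0"
    by blast+
  obtain a1 a2 a3 where a: "a = (a1, a2, a3)" by (cases a) auto
  obtain b1 b2 b3 where b: "b = (b1, b2, b3)" by (cases b) auto
  have minors: "a2 * b3 = a3 * b2" "a1 * b3 = a3 * b1" "a1 * b2 = a2 * b1"
    using dets by (simp_all add: a b det3_def algebra_simps)
  consider "a1 \<noteq> 0" | "a2 \<noteq> 0" | "a3 \<noteq> 0" using assms(1) a by auto
  then show False
  proof cases
    case 1
    then have "b = sc3 (b1 / a1) a" using minors by (simp add: a b sc3_def field_simps)
    then show False using assms(2) by blast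
  next
    case 2
    then have "b = sc3 (b2 / a2) a" using minors by (simp add: a b sc3_def field_simps)
    then show False using assms(2) by blast
  next
    case 3
    then have "b = sc3 (b3 / a3) a" using minors by (simp add: a b sc3_def field_simps)
    then show False using assms(2) by blast
  qed
qed

lemma dot3_eq_zero_on_basis:
  assumes "det3 a b c \<noteq> 0" and "dot3 u a = 0" "dot3 u b = 0" "dot3 u c = 0"
  shows "u = (0, 0, 0)"
proof -
  obtain a1 a2 a3 where a: "a = (a1, a2, a3)" by (cases a) auto
  obtain b1 b2 b3 where b: "b = (b1, b2, b3)" by (cases b) auto
  obtain c1 c2 c3 where c: "c = (c1, c2, c3)" by (cases c) auto
  obtain u1 u2 u3 where u: "u = (u1, u2, u3)" by (cases u) auto
  have eqs: "u1 * a1 + u2 * a2 + u3 * a3 = 0" "u1 * b1 + u2 * b2 + u3 * b3 = 0"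
    "u1 * c1 + u2 * c2 + u3 * c3 = 0"
    using assms(2-4) by (simp_all add: a b c u dot3_def)
  have "det3 a b c * u1 = 0" "det3 a b c * u2 = 0" "det3 a b c * u3 = 0"
    unfolding a b c det3_def using eqs by simp_all algebra+
  then show ?thesis using assms(1) u by simp
qed

definition cross3 :: "'a::field vec3 \<Rightarrow> 'a vec3 \<Rightarrow> 'a vec3" where
  "cross3 a b = (case a of (a1, a2, a3) \<Rightarrow> case b of (b1, b2, b3) \<Rightarrow>
     (a2 * b3 - a3 * b2, a3 * b1 - a1 * b3, a1 * b2 - a2 * b1))"

lemma orthogonal_imp_multiple_cross3:
  assumes "dot3 v a = 0" "dot3 v b = 0" and "cross3 a b \<noteq> (0, 0, 0)"
  shows "\<exists>m. v = sc3 m (cross3 a b)"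
proof (rule ccontr)
  assume "\<not> ?thesis"
  then obtain w where w: "det3 (cross3 a b) v w \<noteq> 0"
    using det3_extend_two[OF assms(3)] by blast
  obtain a1 a2 a3 where a: "a = (a1, a2, a3)" by (cases a) auto
  obtain b1 b2 b3 where b: "b = (b1, b2, b3)" by (cases b) auto
  obtain v1 v2 v3 where v: "v = (v1, v2, v3)" by (cases v) auto
  obtain w1 w2 w3 where w': "w = (w1, w2, w3)" by (cases w) auto
  have "v1 * a1 + v2 * a2 + v3 * a3 = 0" "v1 * b1 + v2 * b2 + v3 * b3 = 0"
    using assms(1,2) by (simp_all add: a b v dot3_def)
  then have "det3 (cross3 a b) v w = 0"
    unfolding a b v w' cross3_def det3_def by simp algebra
  then show False using w by simp
qed

section \<open>Quadratic forms\<close>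

definition polar :: "'a::field qcoef \<Rightarrow> 'a vec3 \<Rightarrow> 'a vec3 \<Rightarrow> 'a" where
  "polar Q u v = (case Q of (a, b, c, d, e, f) \<Rightarrow>
     case u of (x, y, z) \<Rightarrow> case v of (x', y', z') \<Rightarrow>
     2 * a * x * x' + 2 * b * y * y' + 2 * c * z * z'
       + d * (x * y' + y * x') + e * (x * z' + z * x') + f * (y * z' + z * y'))"

definition qcoef_in_basis :: "'a::field qcoef \<Rightarrow> 'a vec3 \<Rightarrow> 'a vec3 \<Rightarrow> 'a vec3 \<Rightarrow> 'a qcoef" where
  "qcoef_in_basis Q u v w = (qform Q u, qform Q v, qform Q w, polar Q u v, polar Q u w, polar Q v w)"

lemma qform_tuple:
  "qform (a, b, c, d, e, f) (x, y, z) = a * x^2 + b * y^2 + c * z^2 + d * x * y + e * x * z + f * y * z"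
  by (simp add: qform_def)

lemma qform_sc3: "qform Q (sc3 c v) = c^2 * qform Q v"
  by (cases Q; cases v rule: prod_cases3)
    (simp add: qform_def sc3_def power2_eq_square algebra_simps)

lemma qform_lincomb3: "qform Q (lincomb3 k u v w) = qform (qcoef_in_basis Q u v w) k"
proof -
  obtain A B C D E F where Q: "Q = (A, B, C, D, E, F)" by (cases Q) auto
  obtain x y z where k: "k = (x, y, z)" by (cases k) auto
  obtain a1 a2 a3 where u: "u = (a1, a2, a3)" by (cases u) auto
  obtain b1 b2 b3 where v: "v = (b1, b2, b3)" by (cases v) auto
  obtain c1 c2 c3 where w: "w = (c1, c2, c3)" by (cases w) auto
  show ?thesis
    unfolding Q k u v w qcoef_in_basis_def qform_def polar_def lincomb3_def
    by (simp add: power2_eq_square) algebra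
qed

lemma qdisc_qcoef_in_basis: "qdisc (qcoef_in_basis Q u v w) = (det3 u v w)^2 * qdisc Q"
proof -
  obtain A B C D E F where Q: "Q = (A, B, C, D, E, F)" by (cases Q) auto
  obtain a1 a2 a3 where u: "u = (a1, a2, a3)" by (cases u) auto
  obtain b1 b2 b3 where v: "v = (b1, b2, b3)" by (cases v) auto
  obtain c1 c2 c3 where w: "w = (c1, c2, c3)" by (cases w) auto
  show ?thesis
    unfolding Q u v w qdisc_def qcoef_in_basis_def qform_def polar_def det3_def
    by (simp add: power2_eq_square) algebra
qed

lemma polar_ne_zero_on_conic:
  assumes "qdisc Q \<noteq> 0" "det3 u v w \<noteq> 0" and "qform Q u = 0" "qform Q v = 0"
  shows "polar Q u v \<noteq> 0"
proof
  assume "polar Q u v = 0"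
  then have "qdisc (qcoef_in_basis Q u v w) = 0" using assms(3,4) by (simp add: qcoef_in_basis_def qdisc_def)
  then show False using assms(1,2) by (simp add: qdisc_qcoef_in_basis)
qed

lemma conic_point_nonsingular:
  assumes "qdisc Q \<noteq> 0" "det3 u v w \<noteq> 0" and "qform Q u = 0"
  shows "polar Q u v \<noteq> 0 \<or> polar Q u w \<noteq> 0"
proof (rule ccontr)
  assume "\<not> ?thesis"
  then have "qdisc (qcoef_in_basis Q u v w) = 0" using assms(3) by (simp add: qcoef_in_basis_def qdisc_def)
  then show False using assms(1,2) by (simp add: qdisc_qcoef_in_basis)
qed

definition prods3 :: "'a::field vec3 \<Rightarrow> 'a vec3" where
  "prods3 k = (case k of (x, y, z) \<Rightarrow> (x * y, x * z, y * z))"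

lemma qform_lincomb3_on_conic:
  assumes "qform Q p1 = 0" "qform Q p2 = 0" "qform Q p3 = 0"
  shows "qform Q (lincomb3 k p1 p2 p3) = dot3 (polar Q p1 p2, polar Q p1 p3, polar Q p2 p3) (prods3 k)"
  using assms by (cases k rule: prod_cases3)
    (simp add: qform_lincomb3 qcoef_in_basis_def qform_tuple prods3_def dot3_def algebra_simps)

lemma cross3_prods3_eq_zero:
  fixes x y z x' y' z' :: "'a::field"
  assumes "cross3 (prods3 (x, y, z)) (prods3 (x', y', z')) = (0, 0, 0)"
    and "x \<noteq> 0" "y \<noteq> 0" "z \<noteq> 0" "y' \<noteq> 0" "z' \<noteq> 0"
  shows "(x', y', z') = sc3 (x' / x) (x, y, z)"
proof -
  have "z * z' * (x * y' - y * x') = 0" "y * y' * (z * x' - x * z') = 0"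
    using assms(1) by (simp_all add: cross3_def prods3_def algebra_simps)
  then have "x * y' = y * x'" "z * x' = x * z'" using assms(2-6) by simp_all
  then show ?thesis using assms(2) by (simp add: sc3_def field_simps)
qed

section \<open>Incidence in PG(2,q)\<close>

lemma mem_pg_point: "x \<in> pg_point v \<longleftrightarrow> (\<exists>c. x = sc3 c v)"
  by (auto simp: pg_point_def)

lemma pg_point_self: "v \<in> pg_point v"
  unfolding mem_pg_point by (metis sc3_one)

lemma pg_point_eqI:
  assumes "w = sc3 c v" "c \<noteq> 0"
  shows "pg_point w = pg_point v"
proof -
  have v: "v = sc3 (1 / c) w" using assms by (simp add: sc3_sc3)
  have "sc3 k w \<in> pg_point v" "sc3 k v \<in> pg_point w" for k
    unfolding mem_pg_point by (metis assms(1) v sc3_sc3)+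
  then show ?thesis by (auto simp: mem_pg_point)
qed

lemma pg_point_eqD: "pg_point w = pg_point v \<Longrightarrow> \<exists>c. w = sc3 c v"
  using pg_point_self mem_pg_point by metis

lemma pg_point_neq_imp_not_multiple:
  assumes "pg_point v \<noteq> pg_point w" "w \<noteq> (0, 0, 0)"
  shows "w \<noteq> sc3 c v"
  using assms pg_point_eqI sc3_eq_zero_iff by metis

definition pg_rep :: "'a::field vec3 set \<Rightarrow> 'a vec3" where
  "pg_rep P = (SOME v. v \<noteq> (0, 0, 0) \<and> P = pg_point v)"

lemma pg_rep:
  assumes "P \<in> pg_points"
  shows "pg_rep P \<noteq> (0, 0, 0)" "pg_point (pg_rep P) = P"
proof -
  have "\<exists>v. v \<noteq> (0, 0, 0) \<and> P = pg_point v" using assms by (auto simp: pg_points_def)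
  then have "pg_rep P \<noteq> (0, 0, 0) \<and> P = pg_point (pg_rep P)"
    unfolding pg_rep_def by (rule someI_ex)
  then show "pg_rep P \<noteq> (0, 0, 0)" "pg_point (pg_rep P) = P" by simp_all
qed

lemma pg_rep_conic_of:
  assumes "P \<in> conic_of Q"
  shows "pg_rep P \<noteq> (0, 0, 0)" "pg_point (pg_rep P) = P" "qform Q (pg_rep P) = 0"
  using assms pg_rep[of P] pg_point_self[of "pg_rep P"] by (auto simp: conic_of_def)

lemma pg_rep_line_of:
  assumes "P \<in> pg_line_of u"
  shows "pg_rep P \<noteq> (0, 0, 0)" "pg_point (pg_rep P) = P" "dot3 u (pg_rep P) = 0"
  using assms pg_rep[of P] pg_point_self[of "pg_rep P"] by (auto simp: pg_line_of_def)

lemma pg_point_mem_pg_points: "v \<noteq> (0, 0, 0) \<Longrightarrow> pg_point v \<in> pg_points"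
  unfolding pg_points_def by blast

lemma pg_line_of_mem_pg_lines: "u \<noteq> (0, 0, 0) \<Longrightarrow> pg_line_of u \<in> pg_lines"
  unfolding pg_lines_def by blast

lemma pg_point_mem_conic_of:
  assumes "v \<noteq> (0, 0, 0)" "qform Q v = 0"
  shows "pg_point v \<in> conic_of Q"
  using assms pg_point_mem_pg_points[OF assms(1)] by (auto simp: conic_of_def mem_pg_point qform_sc3)

lemma pg_point_mem_line_of:
  assumes "v \<noteq> (0, 0, 0)" "dot3 u v = 0"
  shows "pg_point v \<in> pg_line_of u"
  using assms pg_point_mem_pg_points[OF assms(1)]
  by (auto simp: pg_line_of_def mem_pg_point dot3_sc3_right)

lemma distinct_list_of_card_ge:
  assumes "finite S" "n \<le> card S"
  obtains xs where "length xs = n" "distinct xs" "set xs \<subseteq> S"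
proof -
  obtain ys where ys: "distinct ys" "set ys = S" using finite_distinct_list[OF assms(1)] by blast
  then have "length ys = card S" using distinct_card by fastforce
  then show ?thesis
    using that[of "take n ys"] ys assms(2) by (auto dest: in_set_takeD)
qed

lemma det3_ne_zero_on_conic:
  assumes Q: "qdisc Q \<noteq> 0"
    and on: "\<forall>p\<in>{p1, p2, p3}. p \<noteq> (0, 0, 0) \<and> qform Q p = 0"
    and distinct: "distinct [pg_point p1, pg_point p2, pg_point p3]"
  shows "det3 p1 p2 p3 \<noteq> 0"
proof
  assume collinear: "det3 p1 p2 p3 = 0"
  have "\<forall>c. p2 \<noteq> sc3 c p1"
    using pg_point_neq_imp_not_multiple[of p1 p2] on distinct by simp
  then obtain w where w: "det3 p1 p2 w \<noteq> 0" using det3_extend_two[of p1 p2] on by auto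
  have "p3 = lincomb3 (det3 p3 p2 w / det3 p1 p2 w, det3 p1 p3 w / det3 p1 p2 w, 0) p1 p2 w"
    using lincomb3_frame_coords[OF w, of p3] collinear by (simp add: frame_coords_def)
  then obtain s t where p3: "p3 = lincomb3 (s, t, 0) p1 p2 w" by blast
  have "s \<noteq> 0"
  proof
    assume "s = 0"
    then have "p3 = sc3 t p2" by (simp add: p3 lincomb3_second)
    moreover have "pg_point p2 \<noteq> pg_point p3" using distinct by simp
    ultimately show False using pg_point_neq_imp_not_multiple on by blast
  qed
  moreover have "t \<noteq> 0"
  proof
    assume "t = 0"
    then have "p3 = sc3 s p1" by (simp add: p3 lincomb3_first)
    moreover have "pg_point p1 \<noteq> pg_point p3" using distinct by simp
    ultimately show False using pg_point_neq_imp_not_multiple on by blast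
  qed
  moreover have "polar Q p1 p2 \<noteq> 0" using polar_ne_zero_on_conic[OF Q w] on by simp
  moreover have "qform Q p3 = s * t * polar Q p1 p2"
    using on by (simp add: p3 qform_lincomb3 qcoef_in_basis_def qform_tuple)
  ultimately show False using on by simp
qed

lemma frame_coords_on_conic_nonzero:
  assumes Q: "qdisc Q \<noteq> 0"
    and on: "\<forall>p\<in>{p1, p2, p3, p4}. p \<noteq> (0, 0, 0) \<and> qform Q p = 0"
    and distinct: "distinct [pg_point p1, pg_point p2, pg_point p3, pg_point p4]"
  obtains x y z where "frame_coords p1 p2 p3 p4 = (x, y, z)" "x \<noteq> 0" "y \<noteq> 0" "z \<noteq> 0"
proof -
  have "det3 p1 p2 p3 \<noteq> 0" "det3 p4 p2 p3 \<noteq> 0" "det3 p1 p4 p3 \<noteq> 0" "det3 p1 p2 p4 \<noteq> 0"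
    by (rule det3_ne_zero_on_conic[OF Q]; use on distinct in auto)+
  then show ?thesis using that by (simp add: frame_coords_def)
qed

text \<open>By qform_lincomb3_on_conic, p4 and p5 impose two independent linear conditions on the
  three polar values of a form vanishing at p1, p2, p3, which are therefore determined up to
  a nonzero factor.\<close>

lemma qform_zeros_eq_if_five_common_zeros:
  assumes Q1: "qdisc Q1 \<noteq> 0" and Q2: "qdisc Q2 \<noteq> 0"
    and on: "\<forall>p\<in>{p1, p2, p3, p4, p5}. p \<noteq> (0, 0, 0) \<and> qform Q1 p = 0 \<and> qform Q2 p = 0"
    and distinct: "distinct [pg_point p1, pg_point p2, pg_point p3, pg_point p4, pg_point p5]"
  shows "qform Q1 x = 0 \<longleftrightarrow> qform Q2 x = 0"
proof -
  have D: "det3 p1 p2 p3 \<noteq> 0"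
    by (rule det3_ne_zero_on_conic[OF Q1]) (use on distinct in auto)
  obtain x4 y4 z4 where c4: "frame_coords p1 p2 p3 p4 = (x4, y4, z4)" "x4 \<noteq> 0" "y4 \<noteq> 0" "z4 \<noteq> 0"
    by (rule frame_coords_on_conic_nonzero[OF Q1, of p1 p2 p3 p4]) (use on distinct in auto)
  obtain x5 y5 z5 where c5: "frame_coords p1 p2 p3 p5 = (x5, y5, z5)" "x5 \<noteq> 0" "y5 \<noteq> 0" "z5 \<noteq> 0"
    by (rule frame_coords_on_conic_nonzero[OF Q1, of p1 p2 p3 p5]) (use on distinct in auto)
  have p4: "p4 = lincomb3 (x4, y4, z4) p1 p2 p3"
    using lincomb3_frame_coords[OF D, of p4] c4(1) by simp
  have p5: "p5 = lincomb3 (x5, y5, z5) p1 p2 p3"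
    using lincomb3_frame_coords[OF D, of p5] c5(1) by simp
  define n where "n = cross3 (prods3 (x4, y4, z4)) (prods3 (x5, y5, z5))"
  have n: "n \<noteq> (0, 0, 0)"
  proof
    assume "n = (0, 0, 0)"
    then have "(x5, y5, z5) = sc3 (x5 / x4) (x4, y4, z4)"
      unfolding n_def using c4 c5 by (intro cross3_prods3_eq_zero) simp_all
    then have "p5 = sc3 (x5 / x4) p4" by (simp add: p4 p5 sc3_lincomb3)
    then have "pg_point p5 = pg_point p4"
      using pg_point_eqI[of p5 "x5 / x4" p4] c4(2) c5(2) by simp
    then show False using distinct by simp
  qed
  have scaled: "\<exists>m. m \<noteq> 0 \<and> (\<forall>x. qform Q x = m * dot3 n (prods3 (frame_coords p1 p2 p3 x)))"
    if Q: "qdisc Q \<noteq> 0" and zeros: "\<forall>p\<in>{p1, p2, p3, p4, p5}. qform Q p = 0" for Q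
  proof -
    let ?b = "(polar Q p1 p2, polar Q p1 p3, polar Q p2 p3)"
    have frame: "qform Q (lincomb3 k p1 p2 p3) = dot3 ?b (prods3 k)" for k
      using zeros by (intro qform_lincomb3_on_conic) simp_all
    have "dot3 ?b (prods3 (x4, y4, z4)) = 0" "dot3 ?b (prods3 (x5, y5, z5)) = 0"
      using frame[of "(x4, y4, z4)"] frame[of "(x5, y5, z5)"] zeros p4 p5 by simp_all
    then obtain m where m: "?b = sc3 m n"
      using orthogonal_imp_multiple_cross3 n unfolding n_def by blast
    have "polar Q p1 p2 \<noteq> 0" using polar_ne_zero_on_conic[OF Q D] zeros by simp
    then have "m \<noteq> 0" using m by (auto simp: sc3_def split: prod.splits)
    moreover have "qform Q x = m * dot3 n (prods3 (frame_coords p1 p2 p3 x))" for x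
      using frame[of "frame_coords p1 p2 p3 x"] lincomb3_frame_coords[OF D, of x] m
      by (simp add: dot3_sc3_left)
    ultimately show ?thesis by blast
  qed
  obtain m1 where m1: "m1 \<noteq> 0" "\<And>x. qform Q1 x = m1 * dot3 n (prods3 (frame_coords p1 p2 p3 x))"
    using scaled[OF Q1] on by auto
  obtain m2 where m2: "m2 \<noteq> 0" "\<And>x. qform Q2 x = m2 * dot3 n (prods3 (frame_coords p1 p2 p3 x))"
    using scaled[OF Q2] on by auto
  show ?thesis by (simp only: m1(2) m2(2)) (simp add: m1(1) m2(1))
qed

lemma card_pg_lines_inter_le:
  fixes L :: "'a::{finite,field} vec3 set set"
  assumes "L \<in> pg_lines" "L' \<in> pg_lines" "L \<noteq> L'"
  shows "card (L \<inter> L') \<le> 1"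
proof (rule ccontr)
  obtain u1 where u1: "u1 \<noteq> (0, 0, 0)" "L = pg_line_of u1" using assms(1) by (auto simp: pg_lines_def)
  obtain u2 where u2: "u2 \<noteq> (0, 0, 0)" "L' = pg_line_of u2" using assms(2) by (auto simp: pg_lines_def)
  assume "\<not> card (L \<inter> L') \<le> 1"
  then obtain Ps where Ps: "length Ps = 2" "distinct Ps" "set Ps \<subseteq> L \<inter> L'"
    using distinct_list_of_card_ge[of "L \<inter> L'" 2] by auto
  then obtain P0 P1 where P: "Ps = [P0, P1]" by (auto simp: numeral_eq_Suc length_Suc_conv)
  let ?p0 = "pg_rep P0" and ?p1 = "pg_rep P1"
  have on: "pg_rep P \<noteq> (0, 0, 0) \<and> pg_point (pg_rep P) = P
      \<and> dot3 u1 (pg_rep P) = 0 \<and> dot3 u2 (pg_rep P) = 0" if "P \<in> set Ps" for P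
    using that Ps(3) pg_rep_line_of[of P u1] pg_rep_line_of(3)[of P u2] by (auto simp: u1 u2)
  have p0: "?p0 \<noteq> (0, 0, 0)" "dot3 u1 ?p0 = 0" "dot3 u2 ?p0 = 0"
    and p1: "?p1 \<noteq> (0, 0, 0)" "dot3 u1 ?p1 = 0" "dot3 u2 ?p1 = 0"
    using on[of P0] on[of P1] by (simp_all add: P)
  have "pg_point ?p0 \<noteq> pg_point ?p1" using on[of P0] on[of P1] Ps(2) by (simp add: P)
  then have "\<forall>c. ?p1 \<noteq> sc3 c ?p0" using pg_point_neq_imp_not_multiple[OF _ p1(1)] by blast
  then obtain w where w: "det3 ?p0 ?p1 w \<noteq> 0" using det3_extend_two[OF p0(1)] by blast
  have w1: "dot3 u1 w \<noteq> 0" using dot3_eq_zero_on_basis[OF w, of u1] p0 p1 u1(1) by blast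
  have w2: "dot3 u2 w \<noteq> 0" using dot3_eq_zero_on_basis[OF w, of u2] p0 p1 u2(1) by blast
  have along_w: "dot3 u v = (det3 ?p0 ?p1 v / det3 ?p0 ?p1 w) * dot3 u w"
    if "dot3 u ?p0 = 0" "dot3 u ?p1 = 0" for u v
  proof -
    have "dot3 u v = dot3 u (lincomb3 (frame_coords ?p0 ?p1 w v) ?p0 ?p1 w)"
      by (simp add: lincomb3_frame_coords[OF w])
    then show ?thesis using that by (simp add: frame_coords_def dot3_lincomb3)
  qed
  have "dot3 u1 v = 0 \<longleftrightarrow> dot3 u2 v = 0" for v
    using along_w[of u1 v] along_w[of u2 v] p0 p1 w1 w2 by simp
  then have "L = L'" unfolding u1(2) u2(2) pg_line_of_def by simp
  with assms(3) show False by contradiction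
qed

lemma card_pg_conic_line_inter_le:
  fixes C :: "'a::{finite,field} vec3 set set"
  assumes "C \<in> pg_conics" "L \<in> pg_lines"
  shows "card (C \<inter> L) \<le> 2"
proof (rule ccontr)
  obtain Q where Q: "qdisc Q \<noteq> 0" "C = conic_of Q" using assms(1) by (auto simp: pg_conics_def)
  obtain u where u: "u \<noteq> (0, 0, 0)" "L = pg_line_of u" using assms(2) by (auto simp: pg_lines_def)
  assume "\<not> card (C \<inter> L) \<le> 2"
  then obtain Ps where Ps: "length Ps = 3" "distinct Ps" "set Ps \<subseteq> C \<inter> L"
    using distinct_list_of_card_ge[of "C \<inter> L" 3] by auto
  then obtain P1 P2 P3 where P: "Ps = [P1, P2, P3]" by (auto simp: numeral_eq_Suc length_Suc_conv)
  have on: "pg_rep P \<noteq> (0, 0, 0) \<and> pg_point (pg_rep P) = P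
      \<and> qform Q (pg_rep P) = 0 \<and> dot3 u (pg_rep P) = 0" if "P \<in> set Ps" for P
    using that Ps(3) pg_rep_conic_of[of P Q] pg_rep_line_of(3)[of P u] by (auto simp: Q u)
  have "det3 (pg_rep P1) (pg_rep P2) (pg_rep P3) \<noteq> 0"
    by (rule det3_ne_zero_on_conic[OF Q(1)]) (use on Ps(2) in \<open>simp_all add: P\<close>)
  moreover have "dot3 u (pg_rep P1) = 0" "dot3 u (pg_rep P2) = 0" "dot3 u (pg_rep P3) = 0"
    using on by (simp_all add: P)
  ultimately show False using dot3_eq_zero_on_basis u(1) by blast
qed

lemma card_pg_conics_inter_le:
  fixes C :: "'a::{finite,field} vec3 set set"
  assumes "C \<in> pg_conics" "C' \<in> pg_conics" "C \<noteq> C'"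
  shows "card (C \<inter> C') \<le> 4"
proof (rule ccontr)
  obtain Q where Q: "qdisc Q \<noteq> 0" "C = conic_of Q" using assms(1) by (auto simp: pg_conics_def)
  obtain Q' where Q': "qdisc Q' \<noteq> 0" "C' = conic_of Q'" using assms(2) by (auto simp: pg_conics_def)
  assume "\<not> card (C \<inter> C') \<le> 4"
  then obtain Ps where Ps: "length Ps = 5" "distinct Ps" "set Ps \<subseteq> C \<inter> C'"
    using distinct_list_of_card_ge[of "C \<inter> C'" 5] by auto
  then obtain P1 P2 P3 P4 P5 where P: "Ps = [P1, P2, P3, P4, P5]"
    by (auto simp: numeral_eq_Suc length_Suc_conv)
  have on: "pg_rep P \<noteq> (0, 0, 0) \<and> pg_point (pg_rep P) = P
      \<and> qform Q (pg_rep P) = 0 \<and> qform Q' (pg_rep P) = 0" if "P \<in> set Ps" for P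
    using that Ps(3) pg_rep_conic_of[of P Q] pg_rep_conic_of(3)[of P Q'] by (auto simp: Q Q')
  have "qform Q x = 0 \<longleftrightarrow> qform Q' x = 0" for x
    by (rule qform_zeros_eq_if_five_common_zeros[OF Q(1) Q'(1),
          of "pg_rep P1" "pg_rep P2" "pg_rep P3" "pg_rep P4" "pg_rep P5"])
      (use on Ps(2) in \<open>simp_all add: P\<close>)
  then have "C = C'" by (simp add: Q Q' conic_of_def)
  then show False using assms(3) by simp
qed

lemma card_pg_line_of_ge_of_kernel_basis:
  fixes u :: "'a::{finite,field} vec3"
  assumes w: "det3 a b w \<noteq> 0" and "dot3 u a = 0" "dot3 u b = 0"
  shows "CARD('a) \<le> card (pg_line_of u)"
proof -
  let ?g = "\<lambda>t::'a. lincomb3 (1, t, 0) a b w"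
  have nonzero: "?g t \<noteq> (0, 0, 0)" for t
    using lincomb3_inject[OF w, of "(1, t, 0)" "(0, 0, 0)"] by simp
  have "inj (\<lambda>t. pg_point (?g t))"
  proof (rule injI)
    fix t t' assume "pg_point (?g t) = pg_point (?g t')"
    then obtain c where "?g t = sc3 c (?g t')" using pg_point_eqD by blast
    then have "lincomb3 (1, t, 0) a b w = lincomb3 (c, c * t', 0) a b w"
      by (simp add: sc3_lincomb3, simp add: sc3_def)
    then show "t = t'" using lincomb3_inject[OF w] by simp
  qed
  then have "CARD('a) = card (range (\<lambda>t. pg_point (?g t)))" by (simp add: card_image)
  also have "\<dots> \<le> card (pg_line_of u)"
    using nonzero assms(2,3)
    by (intro card_mono) (auto intro: pg_point_mem_line_of simp: dot3_lincomb3)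
  finally show ?thesis .
qed

lemma card_pg_line_ge:
  fixes L :: "'a::{finite,field} vec3 set set"
  assumes "L \<in> pg_lines"
  shows "CARD('a) \<le> card L"
proof -
  obtain u1 u2 u3 where u: "(u1, u2, u3) \<noteq> (0, 0, 0)" "L = pg_line_of (u1, u2, u3)"
    using assms by (auto simp: pg_lines_def)
  consider "u1 \<noteq> 0" | "u2 \<noteq> 0" | "u3 \<noteq> 0" using u(1) by auto
  then show ?thesis
  proof cases
    case 1
    show ?thesis unfolding u(2)
      by (rule card_pg_line_of_ge_of_kernel_basis[of "(-u2, u1, 0)" "(-u3, 0, u1)" "(1, 0, 0)"])
        (use 1 in \<open>simp_all add: det3_def dot3_def algebra_simps\<close>)
  next
    case 2
    show ?thesis unfolding u(2)
      by (rule card_pg_line_of_ge_of_kernel_basis[of "(u2, -u1, 0)" "(0, -u3, u2)" "(0, 1, 0)"])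
        (use 2 in \<open>simp_all add: det3_def dot3_def algebra_simps\<close>)
  next
    case 3
    show ?thesis unfolding u(2)
      by (rule card_pg_line_of_ge_of_kernel_basis[of "(u3, 0, -u1)" "(0, u3, -u2)" "(0, 0, 1)"])
        (use 3 in \<open>simp_all add: det3_def dot3_def algebra_simps\<close>)
  qed
qed

text \<open>For a point p of the conic and a basis p, u, v, the line joining p to u + t v meets the
  conic again in s(t) p + u + t v, unless it is the tangent at p.\<close>

lemma card_pg_conic_ge:
  fixes C :: "'a::{finite,field} vec3 set set"
  assumes "C \<in> pg_conics" "C \<noteq> {}"
  shows "CARD('a) - 1 \<le> card C"
proof -
  obtain Q where Q: "qdisc Q \<noteq> 0" "C = conic_of Q" using assms(1) by (auto simp: pg_conics_def)
  obtain P where "P \<in> C" using assms(2) by blast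
  define p where "p = pg_rep P"
  have p: "p \<noteq> (0, 0, 0)" "qform Q p = 0"
    using pg_rep_conic_of[of P Q] \<open>P \<in> C\<close> Q(2) unfolding p_def by simp_all
  obtain u v where D: "det3 p u v \<noteq> 0" using det3_extend_one[OF p(1)] by blast
  define b0 where "b0 = polar Q p u"
  define b1 where "b1 = polar Q p v"
  have "b0 \<noteq> 0 \<or> b1 \<noteq> 0"
    using conic_point_nonsingular[OF Q(1) D p(2)] by (simp add: b0_def b1_def)
  define r where "r = (if b1 = 0 then 0 else - b0 / b1)"
  have r: "b0 + t * b1 \<noteq> 0" if "t \<noteq> r" for t
  proof
    assume "b0 + t * b1 = 0"
    moreover from this have "b1 \<noteq> 0" using \<open>b0 \<noteq> 0 \<or> b1 \<noteq> 0\<close> by auto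
    ultimately have "t = r" by (simp add: r_def field_simps add_eq_0_iff)
    then show False using that by contradiction
  qed
  define s where "s t = - (qform Q u + t^2 * qform Q v + t * polar Q u v) / (b0 + t * b1)" for t
  let ?g = "\<lambda>t. lincomb3 (s t, 1, t) p u v"
  have nonzero: "?g t \<noteq> (0, 0, 0)" for t
    using lincomb3_inject[OF D, of "(s t, 1, t)" "(0, 0, 0)"] by simp
  have "qform Q (?g t) = s t * (b0 + t * b1) + (qform Q u + t^2 * qform Q v + t * polar Q u v)" for t
    using p(2)
    by (simp add: qform_lincomb3 qcoef_in_basis_def qform_tuple b0_def b1_def algebra_simps power2_eq_square)
  then have on: "qform Q (?g t) = 0" if "t \<noteq> r" for t
    using r[OF that] by (simp add: s_def)
  have "inj (\<lambda>t. pg_point (?g t))"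
  proof (rule injI)
    fix t t' assume "pg_point (?g t) = pg_point (?g t')"
    then obtain c where "?g t = sc3 c (?g t')" using pg_point_eqD by blast
    then have "lincomb3 (s t, 1, t) p u v = lincomb3 (c * s t', c, c * t') p u v"
      by (simp add: sc3_lincomb3, simp add: sc3_def)
    then show "t = t'" using lincomb3_inject[OF D] by simp
  qed
  then have "CARD('a) - 1 = card ((\<lambda>t. pg_point (?g t)) ` (UNIV - {r}))"
    by (simp add: card_image inj_on_subset card_Diff_subset)
  also have "\<dots> \<le> card C"
    using nonzero on Q(2) by (intro card_mono) (auto intro: pg_point_mem_conic_of)
  finally show ?thesis .
qed

section \<open>One round of bit flipping\<close>

lemma odd_card_sym_diff_iff:
  assumes "finite A" "finite B"
  shows "odd (card ((A - B) \<union> (B - A))) \<longleftrightarrow> odd (card A) \<noteq> odd (card B)"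
proof -
  have "card A = card (A - B) + card (A \<inter> B)" "card B = card (B - A) + card (A \<inter> B)"
    using card_Int_Diff[OF assms(1), of B] card_Int_Diff[OF assms(2), of A]
    by (simp_all add: Int_commute)
  moreover have "card ((A - B) \<union> (B - A)) = card (A - B) + card (B - A)"
    using assms by (intro card_Un_disjoint) auto
  ultimately show ?thesis by auto
qed

lemma syndrome_add_codeword:
  assumes "finite K" "in_kernel R K H c" "r \<in> R"
  shows "syndrome R K H (\<lambda>k. c k \<noteq> e k) r \<longleftrightarrow> odd (card {k\<in>K. H r k \<and> e k})"
proof -
  let ?A = "{k\<in>K. H r k \<and> c k}" and ?B = "{k\<in>K. H r k \<and> e k}"
  have "{k\<in>K. H r k \<and> (c k \<noteq> e k)} = (?A - ?B) \<union> (?B - ?A)" by auto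
  moreover have "even (card ?A)" using assms(2,3) by (simp add: in_kernel_def)
  ultimately show ?thesis
    unfolding syndrome_def using odd_card_sym_diff_iff[of ?A ?B] assms(1) by simp
qed

lemma card_UN_le_mult:
  assumes "finite I" "\<And>i. i \<in> I \<Longrightarrow> card (A i) \<le> b"
  shows "card (\<Union>i\<in>I. A i) \<le> b * card I"
proof -
  have "card (\<Union>i\<in>I. A i) \<le> (\<Sum>i\<in>I. card (A i))" by (rule card_UN_le[OF assms(1)])
  also have "\<dots> \<le> (\<Sum>i\<in>I. b)" using assms(2) by (intro sum_mono) auto
  finally show ?thesis by (simp add: mult.commute)
qed

text \<open>A check of an erroneous column j stays satisfied only if another error shares it.\<close>

lemma card_col_le_unsat_of_error:
  assumes fin: "finite R" "finite K" and ker: "in_kernel R K H c"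
    and j: "j \<in> K" "e j"
    and inter: "\<forall>k\<in>K. j \<noteq> k \<longrightarrow> card {r\<in>R. H r j \<and> H r k} \<le> l"
  shows "card {r\<in>R. H r j} \<le> unsat R K H (\<lambda>k. c k \<noteq> e k) j + l * (hweight K e - 1)"
proof -
  let ?s = "syndrome R K H (\<lambda>k. c k \<noteq> e k)"
  let ?E = "{k\<in>K. e k}"
  have "{r\<in>R. H r j \<and> \<not> ?s r} \<subseteq> (\<Union>k\<in>?E - {j}. {r\<in>R. H r j \<and> H r k})"
  proof
    fix r assume r: "r \<in> {r\<in>R. H r j \<and> \<not> ?s r}"
    then have "even (card {k\<in>K. H r k \<and> e k})" using syndrome_add_codeword[OF fin(2) ker] by auto
    then have "{k\<in>K. H r k \<and> e k} \<noteq> {j}" by auto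
    moreover have "j \<in> {k\<in>K. H r k \<and> e k}" using r j by auto
    ultimately obtain k where "k \<in> K" "H r k" "e k" "k \<noteq> j" by blast
    then show "r \<in> (\<Union>k\<in>?E - {j}. {r\<in>R. H r j \<and> H r k})" using r by auto
  qed
  then have "card {r\<in>R. H r j \<and> \<not> ?s r} \<le> card (\<Union>k\<in>?E - {j}. {r\<in>R. H r j \<and> H r k})"
    using fin(1) by (intro card_mono) (auto intro: finite_subset)
  also have "\<dots> \<le> l * card (?E - {j})"
    using fin(2) inter by (intro card_UN_le_mult) auto
  also have "card (?E - {j}) = hweight K e - 1"
    using j fin(2) by (simp add: hweight_def)
  finally have "card {r\<in>R. H r j \<and> \<not> ?s r} \<le> l * (hweight K e - 1)" .
  moreover have "card {r\<in>R. H r j} = unsat R K H (\<lambda>k. c k \<noteq> e k) j + card {r\<in>R. H r j \<and> \<not> ?s r}"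
    unfolding unsat_def using fin(1)
    by (subst card_Un_disjoint[symmetric]) (auto intro: arg_cong[where f = card])
  ultimately show ?thesis by linarith
qed

lemma unsat_le_of_no_error:
  assumes fin: "finite R" "finite K" and ker: "in_kernel R K H c"
    and j: "j \<in> K" "\<not> e j"
    and inter: "\<forall>k\<in>K. j \<noteq> k \<longrightarrow> card {r\<in>R. H r j \<and> H r k} \<le> l"
  shows "unsat R K H (\<lambda>k. c k \<noteq> e k) j \<le> l * hweight K e"
proof -
  let ?E = "{k\<in>K. e k}"
  have "{r\<in>R. H r j \<and> syndrome R K H (\<lambda>k. c k \<noteq> e k) r} \<subseteq> (\<Union>k\<in>?E. {r\<in>R. H r j \<and> H r k})"
  proof
    fix r assume r: "r \<in> {r\<in>R. H r j \<and> syndrome R K H (\<lambda>k. c k \<noteq> e k) r}"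
    then have "odd (card {k\<in>K. H r k \<and> e k})" using syndrome_add_codeword[OF fin(2) ker] by auto
    then have "{k\<in>K. H r k \<and> e k} \<noteq> {}" by (metis card.empty even_zero)
    then obtain k where "k \<in> K" "H r k" "e k" by blast
    then show "r \<in> (\<Union>k\<in>?E. {r\<in>R. H r j \<and> H r k})" using r by auto
  qed
  then have "unsat R K H (\<lambda>k. c k \<noteq> e k) j \<le> card (\<Union>k\<in>?E. {r\<in>R. H r j \<and> H r k})"
    unfolding unsat_def using fin(1) by (intro card_mono) (auto intro: finite_subset)
  also have "\<dots> \<le> l * card ?E"
    using fin(2) inter j by (intro card_UN_le_mult) auto
  finally show ?thesis by (simp add: hweight_def)
qed

lemma bitflip_corrects:
  assumes fin: "finite R" "finite K"
    and weight: "\<forall>j\<in>K. m \<le> card {r\<in>R. H r j}"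
    and inter: "\<forall>j\<in>K. \<forall>k\<in>K. j \<noteq> k \<longrightarrow> card {r\<in>R. H r j \<and> H r k} \<le> l"
    and ker: "in_kernel R K H c"
    and small: "2 * l * hweight K e \<le> v" and threshold: "v < m + l"
    and j: "j \<in> K"
  shows "bitflip R K H v (\<lambda>k. c k \<noteq> e k) j = c j"
proof (cases "e j")
  case True
  have "hweight K e \<noteq> 0" using True j fin(2) by (auto simp: hweight_def)
  then have "l * (hweight K e - 1) + l = l * hweight K e" by (cases "hweight K e") auto
  moreover have "m \<le> unsat R K H (\<lambda>k. c k \<noteq> e k) j + l * (hweight K e - 1)"
    using weight j card_col_le_unsat_of_error[where e = e, OF fin ker j True bspec[OF inter j]]
    by (meson le_trans)
  ultimately have "2 * unsat R K H (\<lambda>k. c k \<noteq> e k) j > v" using small threshold by linarith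
  then show ?thesis using True by (simp add: bitflip_def)
next
  case False
  then have "2 * unsat R K H (\<lambda>k. c k \<noteq> e k) j \<le> v"
    using unsat_le_of_no_error[where e = e, OF fin ker j False bspec[OF inter j]] small by linarith
  then show ?thesis using False by (simp add: bitflip_def)
qed

section \<open>The matrix H_{q,t}\<close>

lemma max_col_intersection_le:
  assumes "j \<in> K" "k \<in> K" "j \<noteq> k"
    and "\<forall>j\<in>K. \<forall>k\<in>K. j \<noteq> k \<longrightarrow> card {r\<in>R. H r j \<and> H r k} \<le> l"
  shows "max_col_intersection R K H \<le> l"
proof -
  let ?S = "{card {r\<in>R. H r j \<and> H r k} | j k. j \<in> K \<and> k \<in> K \<and> j \<noteq> k}"
  have bounded: "n \<le> l" if "n \<in> ?S" for n
    using that assms(4) by auto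
  then have "finite ?S" by (meson atMost_iff finite_atMost finite_subset subsetI)
  moreover have "card {r\<in>R. H r j \<and> H r k} \<in> ?S" using assms(1-3) by auto
  ultimately show ?thesis
    unfolding max_col_intersection_def using bounded by (intro Max.boundedI) auto
qed

definition col_points :: "'p set + nat \<times> 'p set \<Rightarrow> 'p set" where
  "col_points j = (case j of Inl L \<Rightarrow> L | Inr (_, C) \<Rightarrow> C)"

lemma Hent_iff: "Hent P j \<longleftrightarrow> P \<in> col_points j"
  by (auto simp: Hent_def col_points_def split: sum.splits)

lemma proj_bundle_conic_nonempty:
  fixes \<Gamma> :: "('a::{finite,field}) vec3 set set set"
  assumes "proj_bundle \<Gamma>" "C \<in> \<Gamma>"
  shows "C \<noteq> {}"
proof -
  have "card \<Gamma> = CARD('a)^2 + CARD('a) + 1" using assms(1) by (simp add: proj_bundle_def)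
  moreover have "CARD('a) > 0" by (simp add: card_gt_0_iff)
  ultimately have "card \<Gamma> \<ge> 2" by linarith
  then have "card (\<Gamma> - {C}) \<ge> 1" using assms(2) card.infinite by fastforce
  then obtain D where "D \<in> \<Gamma>" "D \<noteq> C" by (metis Diff_iff card.empty not_one_le_zero ex_in_conv singletonI)
  then have "card (C \<inter> D) = 1" using assms by (simp add: proj_bundle_def)
  then show ?thesis by auto
qed

lemma card_Hcol_ge:
  fixes \<Gamma> :: "nat \<Rightarrow> ('a::{finite,field}) vec3 set set set"
  assumes "\<forall>i\<in>{1..t}. proj_bundle (\<Gamma> i)" "j \<in> Hcols t \<Gamma>"
  shows "CARD('a) - 1 \<le> card {r\<in>pg_points. Hent r j}"
  using assms(2) unfolding Hcols_def
proof (elim UnE imageE UN_E)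
  fix L assume L: "L \<in> pg_lines" "j = Inl L"
  then have "{r\<in>pg_points. Hent r j} = L"
    by (auto simp: Hent_iff col_points_def pg_lines_def pg_line_of_def)
  then show ?thesis using card_pg_line_ge[OF L(1)] by simp
next
  fix i C assume C: "i \<in> {1..t}" "C \<in> \<Gamma> i" "j = Inr (i, C)"
  have bundle_i: "proj_bundle (\<Gamma> i)" using assms(1) C(1) by blast
  then have "C \<in> pg_conics" "C \<noteq> {}"
    using C(2) proj_bundle_conic_nonempty by (auto simp: proj_bundle_def)
  moreover from this have "{r\<in>pg_points. Hent r j} = C"
    using C(3) by (auto simp: Hent_iff col_points_def pg_conics_def conic_of_def)
  ultimately show ?thesis using card_pg_conic_ge by simp
qed

lemma card_Hcols_inter_le:
  fixes \<Gamma> :: "nat \<Rightarrow> ('a::{finite,field}) vec3 set set set"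
  assumes conics: "\<forall>i\<in>{1..t}. \<Gamma> i \<subseteq> pg_conics"
    and disjoint: "\<forall>i\<in>{1..t}. \<forall>j\<in>{1..t}. i \<noteq> j \<longrightarrow> \<Gamma> i \<inter> \<Gamma> j = {}"
    and cols: "j \<in> Hcols t \<Gamma>" "k \<in> Hcols t \<Gamma>" "j \<noteq> k"
  shows "card {r\<in>pg_points. Hent r j \<and> Hent r k} \<le> 4"
proof -
  have "card (col_points j \<inter> col_points k) \<le> 4"
    using cols(1,2) unfolding Hcols_def
  proof (elim UnE imageE UN_E)
    fix L L' assume "L \<in> pg_lines" "j = Inl L" "L' \<in> pg_lines" "k = Inl L'"
    then show ?thesis using card_pg_lines_inter_le[of L L'] cols(3) by (simp add: col_points_def)
  next
    fix L i C assume "L \<in> pg_lines" "j = Inl L" "i \<in> {1..t}" "C \<in> \<Gamma> i" "k = Inr (i, C)"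
    moreover from this have "C \<in> pg_conics" using conics by blast
    ultimately show ?thesis
      using card_pg_conic_line_inter_le[of C L] by (simp add: col_points_def Int_commute)
  next
    fix L i C assume "L \<in> pg_lines" "k = Inl L" "i \<in> {1..t}" "C \<in> \<Gamma> i" "j = Inr (i, C)"
    moreover from this have "C \<in> pg_conics" using conics by blast
    ultimately show ?thesis using card_pg_conic_line_inter_le[of C L] by (simp add: col_points_def)
  next
    fix i C i' C'
    assume "i \<in> {1..t}" "C \<in> \<Gamma> i" "j = Inr (i, C)" "i' \<in> {1..t}" "C' \<in> \<Gamma> i'" "k = Inr (i', C')"
    moreover from this have "C \<noteq> C'" using cols(3) disjoint by blast
    moreover from calculation have "C \<in> pg_conics" "C' \<in> pg_conics" using conics by blast+
    ultimately show ?thesis using card_pg_conics_inter_le[of C C'] by (simp add: col_points_def)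
  qed
  moreover have "card {r\<in>pg_points. Hent r j \<and> Hent r k} \<le> card (col_points j \<inter> col_points k)"
    by (rule card_mono) (auto simp: Hent_iff)
  ultimately show ?thesis by linarith
qed

theorem proposition5p3:
  fixes \<Gamma> :: "nat \<Rightarrow> ('a::{finite,field}) vec3 set set set" and t :: nat
  assumes "t > 1"
    and "\<forall>i\<in>{1..t}. proj_bundle (\<Gamma> i)"
    and "\<forall>i\<in>{1..t}. \<forall>j\<in>{1..t}. i \<noteq> j \<longrightarrow> \<Gamma> i \<inter> \<Gamma> j = {}"
  shows "max_col_intersection pg_points (Hcols t \<Gamma>) Hent \<le> 4
    \<and> (\<forall>c e. in_kernel pg_points (Hcols t \<Gamma>) Hent c
          \<and> hweight (Hcols t \<Gamma>) e \<le> (CARD('a) + 1) div 8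
          \<longrightarrow> (\<forall>j\<in>Hcols t \<Gamma>.
                bitflip pg_points (Hcols t \<Gamma>) Hent (CARD('a) + 1) (\<lambda>k. c k \<noteq> e k) j = c j))"
proof -
  let ?K = "Hcols t \<Gamma>"
  have inter: "\<forall>j\<in>?K. \<forall>k\<in>?K. j \<noteq> k \<longrightarrow> card {r\<in>pg_points. Hent r j \<and> Hent r k} \<le> 4"
    using card_Hcols_inter_le[of t \<Gamma>] assms(2,3) by (simp add: proj_bundle_def)
  have weight: "\<forall>j\<in>?K. CARD('a) - 1 \<le> card {r\<in>pg_points. Hent r j}"
    using card_Hcol_ge assms(2) by blast
  have "card (\<Gamma> 1) = CARD('a)^2 + CARD('a) + 1" using assms(1,2) by (simp add: proj_bundle_def)
  then obtain C where "C \<in> \<Gamma> 1" by fastforce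
  then have conic_col: "Inr (1, C) \<in> ?K" using assms(1) unfolding Hcols_def by force
  have line_col: "Inl (pg_line_of (1, 0, 0)) \<in> ?K"
    using pg_line_of_mem_pg_lines[of "(1, 0, 0) :: 'a vec3"] unfolding Hcols_def by simp
  have "max_col_intersection pg_points ?K Hent \<le> 4"
    by (rule max_col_intersection_le[OF line_col conic_col _ inter]) simp
  moreover have "bitflip pg_points ?K Hent (CARD('a) + 1) (\<lambda>k. c k \<noteq> e k) j = c j"
    if "in_kernel pg_points ?K Hent c" "hweight ?K e \<le> (CARD('a) + 1) div 8" "j \<in> ?K" for c e j
  proof (rule bitflip_corrects[OF _ _ weight inter that(1) _ _ that(3)])
    show "finite ?K" by (simp add: Hcols_def)
    show "2 * 4 * hweight ?K e \<le> CARD('a) + 1" using that(2) by linarith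
    show "CARD('a) + 1 < CARD('a) - 1 + 4" using card_gt_0_iff[of "UNIV :: 'a set"] by simp
  qed simp
  ultimately show ?thesis by blast
qed

end
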